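(* Let $n\ge 2$. Every equilibrium graph $G$ of $(1,1,\dots,1)$-BG (all $n$ budgets equal to $1$) in the MAX version has connected underlying graph $U(G)$, $U(G)$ has a unique cycle, this cycle has at most $7$ vertices, and every vertex is within distance $2$ in $U(G)$ of the cycle.
   Context: Bounded budget network creation game $(b_1,\dots,b_n)$-BG: $n$ players with integer budgets $0\le b_i\le n-1$. A strategy of player $i$ is a set $S_i\subseteq\{1,\dots,n\}\setminus\{i\}$ with $|S_i|=b_i$; a profile is realized by the directed graph $G$ on $u_1,\dots,u_n$ with an arc $\overrightarrow{u_iu_j}$ iff $j\in S_i$. $U(G)$ is the undirected multigraph obtained by ignoring directions; if both $\overrightarrow{uv}$ and $\overrightarrow{vu}$ are arcs (a brace), $uv$ is a double edge of $U(G)$, regarded as a cycle with 2 vertices. $\operatorname{dist}(u,v)$ is the distance in $U(G)$, defined as $n^2$ between different components. MAX cost: $c_{MAX}(u)=\max_v\operatorname{dist}(u,v)+(\kappa-1)n^2$, $\kappa$ the number of components of $U(G)$. An equilibrium graph in the MAX version is a realization in which no vertex can decrease its MAX cost by changing its own strategy while the others are fixed. *)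

theory Defs
  imports Main
begin

text \<open>Players/vertices are 0,...,n-1. A strategy profile S assigns to every player i
  a set S i of other players; the realization G has an arc (i,j) iff j is in S i.\<close>

definition valid_profile :: "nat \<Rightarrow> (nat \<Rightarrow> nat) \<Rightarrow> (nat \<Rightarrow> nat set) \<Rightarrow> bool" where
  "valid_profile n b S \<longleftrightarrow>
     (\<forall>i<n. S i \<subseteq> {0..<n} - {i} \<and> card (S i) = b i)"

definition arcs :: "nat \<Rightarrow> (nat \<Rightarrow> nat set) \<Rightarrow> (nat \<times> nat) set" where
  "arcs n S = {(i, j). i < n \<and> j \<in> S i}"

text \<open>Adjacency in the underlying multigraph U(G) (ignoring multiplicities).\<close>
definition adjU :: "nat \<Rightarrow> (nat \<Rightarrow> nat set) \<Rightarrow> (nat \<times> nat) set" where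
  "adjU n S = {(u, v). u < n \<and> v < n \<and> ((u, v) \<in> arcs n S \<or> (v, u) \<in> arcs n S)}"

definition distU :: "nat \<Rightarrow> (nat \<Rightarrow> nat set) \<Rightarrow> nat \<Rightarrow> nat \<Rightarrow> nat" where
  "distU n S u v =
     (if \<exists>k. (u, v) \<in> adjU n S ^^ k then (LEAST k. (u, v) \<in> adjU n S ^^ k) else n ^ 2)"

definition num_components :: "nat \<Rightarrow> (nat \<Rightarrow> nat set) \<Rightarrow> nat" where
  "num_components n S = card ({0..<n} // ((adjU n S)\<^sup>* \<inter> ({0..<n} \<times> {0..<n})))"

definition connectedU :: "nat \<Rightarrow> (nat \<Rightarrow> nat set) \<Rightarrow> bool" where
  "connectedU n S \<longleftrightarrow> (\<forall>u<n. \<forall>v<n. (u, v) \<in> (adjU n S)\<^sup>*)"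

definition cost_max :: "nat \<Rightarrow> (nat \<Rightarrow> nat set) \<Rightarrow> nat \<Rightarrow> nat" where
  "cost_max n S u = Max ((\<lambda>v. distU n S u v) ` {0..<n}) + (num_components n S - 1) * n ^ 2"

definition max_equilibrium :: "nat \<Rightarrow> (nat \<Rightarrow> nat) \<Rightarrow> (nat \<Rightarrow> nat set) \<Rightarrow> bool" where
  "max_equilibrium n b S \<longleftrightarrow> valid_profile n b S \<and>
     (\<forall>u<n. \<forall>T. T \<subseteq> {0..<n} - {u} \<and> card T = b u \<longrightarrow>
        cost_max n S u \<le> cost_max n (S(u := T)) u)"

text \<open>Cycles of the multigraph U(G): the edges of U(G) are the arcs of G (so a brace is
  a pair of parallel edges).\<close>
definition joins :: "nat \<times> nat \<Rightarrow> nat \<Rightarrow> nat \<Rightarrow> bool" where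
  "joins e a c \<longleftrightarrow> e = (a, c) \<or> e = (c, a)"

definition is_cycleU :: "nat \<Rightarrow> (nat \<Rightarrow> nat set) \<Rightarrow> nat set \<Rightarrow> (nat \<times> nat) set \<Rightarrow> bool" where
  "is_cycleU n S V E \<longleftrightarrow>
     (\<exists>vs es. length vs \<ge> 2 \<and> length es = length vs \<and> distinct vs \<and> distinct es \<and>
        set vs \<subseteq> {0..<n} \<and> set es \<subseteq> arcs n S \<and> set vs = V \<and> set es = E \<and>
        (\<forall>j < length vs. joins (es ! j) (vs ! j) (vs ! (Suc j mod length vs))))"

end

theory Submission
  imports Defs
begin

text \<open>
  With all budgets equal to 1 a profile is a function \<open>f\<close> without fixed points and \<open>U(G)\<close> is
  the undirected graph of \<open>f\<close>: each component is one cycle, formed by the periodic points of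
  \<open>f\<close>, with trees hanging from it, and \<open>depth x\<close> is the number of \<open>f\<close>-steps from \<open>x\<close> to the
  cycle. In an equilibrium:
  \<^item> \<open>U(G)\<close> is connected, since otherwise a cycle vertex \<open>u\<close> redirects its arc into another
    component; \<open>u\<close> stays attached to \<open>f u\<close> through the rest of its cycle, so the number of
    components, and with it the penalty \<open>(\<kappa> - 1) n\<^sup>2\<close>, drops.
  \<^item> Every depth is at most 2: a deepest vertex \<open>v\<close> of depth \<open>D \<ge> 3\<close> has eccentricity at
    least \<open>D + 1\<close>, and redirecting its arc from \<open>f v\<close> to \<open>f (f v)\<close> shortens every distance
    from \<open>v\<close> that exceeds 3.
  \<^item> The cycle has length \<open>L \<le> 7\<close>: the cycle vertex \<open>c\<close> opposite to the root of a deepest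
    vertex has eccentricity at least \<open>L div 2 + D\<close>, but if \<open>L \<ge> 8\<close> the chord from \<open>c\<close> to
    \<open>f\<^sup>3 c\<close> brings it down to \<open>L div 2 - 1 + D\<close>.
  Lower bounds on distances come from the potential "offset of the root along the cycle plus
  depth", which changes by at most 1 along every edge.
\<close>

section \<open>Distances along a relation\<close>

definition rel_dist :: "('a \<times> 'a) set \<Rightarrow> nat \<Rightarrow> 'a \<Rightarrow> 'a \<Rightarrow> nat" where
  "rel_dist R N a b = (if \<exists>k. (a, b) \<in> R ^^ k then (LEAST k. (a, b) \<in> R ^^ k) else N)"

lemma distU_eq_rel_dist: "distU n S u v = rel_dist (adjU n S) (n\<^sup>2) u v"
  unfolding distU_def rel_dist_def ..

lemma rel_dist_le: "(a, b) \<in> R ^^ k \<Longrightarrow> rel_dist R N a b \<le> k"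
  unfolding rel_dist_def by (auto intro: Least_le)

lemma rel_dist_relpow: "(a, b) \<in> R ^^ k \<Longrightarrow> (a, b) \<in> R ^^ rel_dist R N a b"
  unfolding rel_dist_def by (auto intro: LeastI)

lemma rel_dist_eq_0D: "(a, b) \<in> R ^^ k \<Longrightarrow> rel_dist R N a b = 0 \<Longrightarrow> a = b"
  by (metis rel_dist_relpow relpow_0_E)

lemma rel_dist_SucE:
  assumes "(a, b) \<in> R ^^ k" "rel_dist R N a b = Suc j"
  obtains y where "rel_dist R N a y = j" "(a, y) \<in> R ^^ j" "(y, b) \<in> R"
proof -
  from rel_dist_relpow[OF assms(1), of N] assms(2)
  obtain y where y: "(a, y) \<in> R ^^ j" "(y, b) \<in> R" by auto
  have "rel_dist R N a y = j"
  proof (rule antisym)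
    show "rel_dist R N a y \<le> j" using y(1) by (rule rel_dist_le)
    have "(a, b) \<in> R ^^ Suc (rel_dist R N a y)" using rel_dist_relpow[OF y(1)] y(2) by auto
    from rel_dist_le[OF this, of N] show "j \<le> rel_dist R N a y" using assms(2) by simp
  qed
  with y that show thesis by blast
qed

lemma rel_dist_le_card:
  assumes "finite R" "card R \<le> N"
  shows "rel_dist R N a b \<le> N"
proof (cases "\<exists>k. (a, b) \<in> R ^^ k")
  case True
  then have "(a, b) \<in> R\<^sup>*" by (auto simp: rtrancl_power)
  then obtain k where "k \<le> card R" "(a, b) \<in> R ^^ k"
    using rtrancl_finite_eq_relpow[OF assms(1)] by auto
  then show ?thesis using rel_dist_le assms(2) by (meson le_trans)
qed (simp add: rel_dist_def)

lemma relpow_sym: "sym R \<Longrightarrow> (a, b) \<in> R ^^ k \<Longrightarrow> (b, a) \<in> R ^^ k"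
proof (induction k arbitrary: b)
  case (Suc k)
  then obtain y where "(a, y) \<in> R ^^ k" "(y, b) \<in> R" by auto
  with Suc show ?case by (meson relpow_Suc_I2 symD)
qed simp

lemma rel_dist_sym: "sym R \<Longrightarrow> rel_dist R N a b = rel_dist R N b a"
proof -
  assume "sym R"
  then have "(a, b) \<in> R ^^ k \<longleftrightarrow> (b, a) \<in> R ^^ k" for k by (meson relpow_sym)
  then show ?thesis unfolding rel_dist_def by simp
qed

lemma potential_le_rel_dist:
  fixes \<phi> :: "'a \<Rightarrow> int"
  assumes "\<And>x y. (x, y) \<in> R \<Longrightarrow> \<phi> y \<le> \<phi> x + 1" and "(a, b) \<in> R ^^ k"
  shows "\<phi> b - \<phi> a \<le> int (rel_dist R N a b)"
proof -
  have "\<phi> y \<le> \<phi> a + int j" if "(a, y) \<in> R ^^ j" for y j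
    using that
  proof (induction j arbitrary: y)
    case (Suc j)
    then obtain z where "(a, z) \<in> R ^^ j" "(z, y) \<in> R" by auto
    with Suc.IH assms(1)[of z y] show ?case by fastforce
  qed simp
  from this[OF rel_dist_relpow[OF assms(2), of N]] show ?thesis by simp
qed

lemma card_quotient_less:
  assumes "finite A" "equiv A R" "equiv A R'" "R \<subseteq> R'" "(a, b) \<in> R' - R"
  shows "card (A // R') < card (A // R)"
proof -
  define \<Phi> where "\<Phi> X = R' `` X" for X
  have ab: "a \<in> A" "b \<in> A" using assms(3,5) equiv_type by blast+
  have \<Phi>_class: "\<Phi> (R `` {x}) = R' `` {x}" if "x \<in> A" for x
  proof
    show "\<Phi> (R `` {x}) \<subseteq> R' `` {x}"
      using assms(3,4) unfolding \<Phi>_def equiv_def trans_def by blast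
    show "R' `` {x} \<subseteq> \<Phi> (R `` {x})"
      using assms(2) that unfolding \<Phi>_def equiv_def refl_on_def by blast
  qed
  have "\<Phi> ` (A // R) = A // R'"
    unfolding quotient_def using \<Phi>_class by auto
  moreover have "\<not> inj_on \<Phi> (A // R)"
  proof
    assume "inj_on \<Phi> (A // R)"
    moreover have "\<Phi> (R `` {a}) = \<Phi> (R `` {b})"
      using \<Phi>_class ab assms(3,5) by (simp add: equiv_class_eq)
    ultimately have "R `` {a} = R `` {b}"
      using ab by (auto simp: inj_on_def intro: quotientI)
    then show False using assms(2,5) ab by (simp add: eq_equiv_class_iff)
  qed
  moreover have "finite (A // R)" using assms(1,2) by (simp add: equiv_type finite_quotient)
  ultimately show ?thesis
    using card_image_le[of "A // R" \<Phi>] inj_on_iff_eq_card[of "A // R" \<Phi>] by force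
qed

section \<open>The undirected graph of a function\<close>

definition fun_adj :: "nat \<Rightarrow> (nat \<Rightarrow> nat) \<Rightarrow> (nat \<times> nat) set" where
  "fun_adj n h = {(a, b). a < n \<and> b < n \<and> (b = h a \<or> a = h b)}"

definition fun_connected :: "nat \<Rightarrow> (nat \<Rightarrow> nat) \<Rightarrow> bool" where
  "fun_connected n h \<longleftrightarrow> (\<forall>a<n. \<forall>b<n. (a, b) \<in> (fun_adj n h)\<^sup>*)"

definition fun_components :: "nat \<Rightarrow> (nat \<Rightarrow> nat) \<Rightarrow> nat" where
  "fun_components n h = card ({0..<n} // ((fun_adj n h)\<^sup>* \<inter> {0..<n} \<times> {0..<n}))"

definition fun_ecc :: "nat \<Rightarrow> (nat \<Rightarrow> nat) \<Rightarrow> nat \<Rightarrow> nat" where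
  "fun_ecc n h u = Max ((\<lambda>v. rel_dist (fun_adj n h) (n\<^sup>2) u v) ` {0..<n})"

definition fun_cost :: "nat \<Rightarrow> (nat \<Rightarrow> nat) \<Rightarrow> nat \<Rightarrow> nat" where
  "fun_cost n h u = fun_ecc n h u + (fun_components n h - 1) * n\<^sup>2"

definition improving_move :: "nat \<Rightarrow> (nat \<Rightarrow> nat) \<Rightarrow> nat \<Rightarrow> nat \<Rightarrow> bool" where
  "improving_move n h u t \<longleftrightarrow>
     u < n \<and> t < n \<and> t \<noteq> u \<and> fun_cost n (h(u := t)) u < fun_cost n h u"

lemma adjU_eq_fun_adj: "(\<And>i. i < n \<Longrightarrow> S i = {h i}) \<Longrightarrow> adjU n S = fun_adj n h"
  unfolding adjU_def arcs_def fun_adj_def by auto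

lemma cost_max_eq_fun_cost: "(\<And>i. i < n \<Longrightarrow> S i = {h i}) \<Longrightarrow> cost_max n S u = fun_cost n h u"
  unfolding cost_max_def fun_cost_def num_components_def fun_components_def fun_ecc_def
    distU_eq_rel_dist by (simp add: adjU_eq_fun_adj)

lemma connectedU_iff_fun_connected:
  "(\<And>i. i < n \<Longrightarrow> S i = {h i}) \<Longrightarrow> connectedU n S \<longleftrightarrow> fun_connected n h"
  unfolding connectedU_def fun_connected_def by (simp add: adjU_eq_fun_adj)

lemma sym_fun_adj: "sym (fun_adj n h)"
  unfolding fun_adj_def sym_def by auto

lemma fun_adj_subset: "fun_adj n h \<subseteq> {0..<n} \<times> {0..<n}"
  unfolding fun_adj_def by auto

lemma rel_dist_fun_adj_le_sq: "rel_dist (fun_adj n h) (n\<^sup>2) a b \<le> n\<^sup>2"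
proof (rule rel_dist_le_card)
  show "finite (fun_adj n h)" using fun_adj_subset finite_subset by blast
  have "card (fun_adj n h) \<le> card ({0..<n} \<times> {0..<n})"
    using fun_adj_subset by (intro card_mono) auto
  then show "card (fun_adj n h) \<le> n\<^sup>2" by (simp add: power2_eq_square)
qed

lemma rel_dist_le_fun_ecc: "x < n \<Longrightarrow> rel_dist (fun_adj n h) (n\<^sup>2) u x \<le> fun_ecc n h u"
  unfolding fun_ecc_def by (rule Max_ge) auto

lemma fun_ecc_le:
  "0 < n \<Longrightarrow> (\<And>x. x < n \<Longrightarrow> rel_dist (fun_adj n h) (n\<^sup>2) u x \<le> B) \<Longrightarrow> fun_ecc n h u \<le> B"
  unfolding fun_ecc_def by (subst Max_le_iff) auto

lemma fun_connected_if_reaches_all: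
  assumes "\<And>x. x < n \<Longrightarrow> (u, x) \<in> (fun_adj n h)\<^sup>*"
  shows "fun_connected n h"
  unfolding fun_connected_def
proof (intro allI impI)
  fix a b assume "a < n" "b < n"
  have "(a, u) \<in> (fun_adj n h)\<^sup>*"
    using assms[OF \<open>a < n\<close>] by (rule symD[OF sym_rtrancl[OF sym_fun_adj]])
  moreover have "(u, b) \<in> (fun_adj n h)\<^sup>*" using assms[OF \<open>b < n\<close>] .
  ultimately show "(a, b) \<in> (fun_adj n h)\<^sup>*" by (rule rtrancl_trans)
qed

lemma equiv_fun_reach: "equiv {0..<n} ((fun_adj n h)\<^sup>* \<inter> {0..<n} \<times> {0..<n})"
proof (rule equivI)
  show "refl_on {0..<n} ((fun_adj n h)\<^sup>* \<inter> {0..<n} \<times> {0..<n})"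
    unfolding refl_on_def by auto
  show "sym ((fun_adj n h)\<^sup>* \<inter> {0..<n} \<times> {0..<n})"
    by (intro sym_Int sym_rtrancl sym_fun_adj) (auto simp: sym_def)
  show "trans ((fun_adj n h)\<^sup>* \<inter> {0..<n} \<times> {0..<n})"
    by (intro trans_Int trans_rtrancl) (auto simp: trans_def)
qed auto

lemma fun_components_pos: "0 < n \<Longrightarrow> 0 < fun_components n h"
  unfolding fun_components_def
  by (subst card_gt_0_iff) (auto simp: equiv_type[OF equiv_fun_reach] finite_quotient quotient_def)

lemma fun_cost_if_connected: "fun_connected n h \<Longrightarrow> 0 < n \<Longrightarrow> fun_cost n h u = fun_ecc n h u"
proof -
  assume "fun_connected n h" "0 < n"
  then have "(fun_adj n h)\<^sup>* \<inter> {0..<n} \<times> {0..<n} = {0..<n} \<times> {0..<n}"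
    unfolding fun_connected_def by auto
  moreover have "{0..<n} // ({0..<n} \<times> {0..<n}) = {{0..<n}}"
    using \<open>0 < n\<close> unfolding quotient_def by auto
  ultimately show ?thesis unfolding fun_cost_def fun_components_def by simp
qed

lemma improving_move_if_fun_ecc_less:
  assumes "u < n" "t < n" "t \<noteq> u" "fun_connected n h" "fun_connected n (h(u := t))"
    and "fun_ecc n (h(u := t)) u < fun_ecc n h u"
  shows "improving_move n h u t"
proof -
  have "0 < n" using assms(1) by simp
  then show ?thesis
    using assms fun_cost_if_connected[of n] unfolding improving_move_def by simp
qed

lemma is_cycleU_edge_ends:
  assumes "is_cycleU n S V E" "e \<in> E"
  shows "fst e \<in> V \<and> snd e \<in> V"
proof -
  obtain vs es where c: "length vs \<ge> 2" "length es = length vs" "set vs = V" "set es = E"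
    "\<And>j. j < length vs \<Longrightarrow> joins (es ! j) (vs ! j) (vs ! (Suc j mod length vs))"
    using assms(1) unfolding is_cycleU_def by blast
  obtain j where j: "j < length vs" "e = es ! j" using assms(2) c(2,4) by (metis in_set_conv_nth)
  have "Suc j mod length vs < length vs" using j(1) by (intro mod_less_divisor) linarith
  then have "vs ! j \<in> V" "vs ! (Suc j mod length vs) \<in> V" using c(3) j(1) by auto
  then show ?thesis using c(5)[OF j(1)] j(2) unfolding joins_def by auto
qed

lemma is_cycleUD:
  assumes "is_cycleU n S V E"
  shows "finite V" "V \<noteq> {}" "V \<subseteq> {0..<n}" "E \<subseteq> arcs n S" "card E = card V"
  using assms unfolding is_cycleU_def
  by (auto simp: distinct_card[symmetric] simp del: distinct_card)

lemma is_cycleU_two_edges: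
  assumes "is_cycleU n S V E" "v \<in> V"
  obtains e e' where "e \<in> E" "e' \<in> E" "e \<noteq> e'" "v \<in> {fst e, snd e}" "v \<in> {fst e', snd e'}"
proof -
  obtain vs es where c: "length vs \<ge> 2" "length es = length vs" "distinct es" "set vs = V"
    "set es = E" "\<And>j. j < length vs \<Longrightarrow> joins (es ! j) (vs ! j) (vs ! (Suc j mod length vs))"
    using assms(1) unfolding is_cycleU_def by blast
  obtain j where j: "j < length vs" "v = vs ! j" using assms(2) c(4) by (metis in_set_conv_nth)
  define j' where "j' = (if j = 0 then length vs - 1 else j - 1)"
  have j': "j' < length vs" "Suc j' mod length vs = j" "j' \<noteq> j"
    using c(1) j(1) unfolding j'_def by auto
  have "es ! j \<noteq> es ! j'" using c(2,3) j(1) j' by (simp add: nth_eq_iff_index_eq)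
  moreover have "es ! j \<in> E" "es ! j' \<in> E" using c(2,5) j(1) j'(1) by auto
  moreover have "v \<in> {fst (es ! j), snd (es ! j)}" "v \<in> {fst (es ! j'), snd (es ! j')}"
    using c(6)[OF j(1)] c(6)[OF j'(1)] j(2) j'(2) unfolding joins_def by auto
  ultimately show thesis using that by blast
qed

section \<open>Functional graphs\<close>

lemma funpow_apply_add: "(f ^^ m) ((f ^^ k) x) = (f ^^ (m + k)) x"
  by (simp add: funpow_add)

lemma funpow_commute: "(f ^^ m) ((f ^^ k) x) = (f ^^ k) ((f ^^ m) x)"
  by (simp only: funpow_apply_add add.commute)

locale functional_graph =
  fixes n :: nat and f :: "nat \<Rightarrow> nat"
  assumes f_less: "i < n \<Longrightarrow> f i < n" and f_neq: "i < n \<Longrightarrow> f i \<noteq> i"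
begin

lemma funpow_less: "x < n \<Longrightarrow> (f ^^ k) x < n"
  by (induction k) (auto simp: f_less)

definition periodic :: "nat \<Rightarrow> bool" where
  "periodic x \<longleftrightarrow> (\<exists>k>0. (f ^^ k) x = x)"

definition period :: "nat \<Rightarrow> nat" where
  "period x = (LEAST k. 0 < k \<and> (f ^^ k) x = x)"

lemma
  assumes "periodic x"
  shows period_pos: "0 < period x" and funpow_period: "(f ^^ period x) x = x"
proof -
  from assms obtain k where "0 < k \<and> (f ^^ k) x = x" unfolding periodic_def by blast
  then have "0 < period x \<and> (f ^^ period x) x = x" unfolding period_def by (rule LeastI)
  then show "0 < period x" "(f ^^ period x) x = x" by auto
qed

lemma funpow_neq_below_period: "0 < j \<Longrightarrow> j < period x \<Longrightarrow> (f ^^ j) x \<noteq> x"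
  unfolding period_def using not_less_Least by blast

lemma funpow_mod_period: "periodic x \<Longrightarrow> (f ^^ (j mod period x)) x = (f ^^ j) x"
  by (rule funpow_mod_eq) (rule funpow_period)

lemma inj_on_funpow_period: "periodic x \<Longrightarrow> inj_on (\<lambda>k. (f ^^ k) x) {0..<period x}"
  by (rule inj_on_funpow_least) (auto simp: funpow_period funpow_neq_below_period)

lemma periodic_funpow: "periodic x \<Longrightarrow> periodic ((f ^^ k) x)"
proof -
  assume "periodic x"
  have "(f ^^ period x) ((f ^^ k) x) = (f ^^ k) x"
    using funpow_period[OF \<open>periodic x\<close>] by (simp only: funpow_commute)
  then show ?thesis
    using period_pos[OF \<open>periodic x\<close>] unfolding periodic_def by blast
qed

lemma periodic_f: "periodic x \<Longrightarrow> periodic (f x)"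
  using periodic_funpow[of x 1] by simp

lemma two_le_period:
  assumes "x < n" "periodic x"
  shows "2 \<le> period x"
proof -
  have "period x \<noteq> 1" using funpow_period[OF assms(2)] f_neq[OF assms(1)] by auto
  then show ?thesis using period_pos[OF assms(2)] by linarith
qed

lemma periodic_funpow_if_repeat:
  assumes "i < j" "(f ^^ i) x = (f ^^ j) x"
  shows "periodic ((f ^^ i) x)"
proof -
  have "(f ^^ (j - i)) ((f ^^ i) x) = (f ^^ (j - i + i)) x"
    by (simp only: funpow_add o_apply)
  also have "\<dots> = (f ^^ i) x" using assms by simp
  finally show ?thesis
    using assms(1) unfolding periodic_def by (intro exI[of _ "j - i"]) simp
qed

lemma ex_periodic_funpow:
  assumes "x < n"
  shows "\<exists>k. periodic ((f ^^ k) x)"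
proof -
  let ?g = "\<lambda>k. (f ^^ k) x"
  have "?g ` {0..n} \<subseteq> {0..<n}" using funpow_less[OF assms] by auto
  then have "card (?g ` {0..n}) \<le> n" using card_mono[of "{0..<n}"] by fastforce
  then have "\<not> inj_on ?g {0..n}" using card_image[of ?g "{0..n}"] by auto
  then obtain i j where "i \<noteq> j" "(f ^^ i) x = (f ^^ j) x" unfolding inj_on_def by auto
  then show ?thesis
    using periodic_funpow_if_repeat by (metis linorder_neqE_nat)
qed

definition depth :: "nat \<Rightarrow> nat" where
  "depth x = (LEAST k. periodic ((f ^^ k) x))"

definition root :: "nat \<Rightarrow> nat" where
  "root x = (f ^^ depth x) x"

lemma periodic_root: "x < n \<Longrightarrow> periodic (root x)"
  unfolding root_def depth_def using ex_periodic_funpow by (auto intro: LeastI_ex)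

lemma root_less: "x < n \<Longrightarrow> root x < n"
  unfolding root_def by (rule funpow_less)

lemma depth_eq_0: "periodic x \<Longrightarrow> depth x = 0"
  unfolding depth_def by simp

lemma root_eq_self: "periodic x \<Longrightarrow> root x = x"
  unfolding root_def by (simp add: depth_eq_0)

lemma not_periodic_below_depth: "k < depth x \<Longrightarrow> \<not> periodic ((f ^^ k) x)"
  unfolding depth_def by (rule not_less_Least)

lemma
  assumes "x < n" "\<not> periodic x"
  shows depth_f: "depth x = Suc (depth (f x))" and root_f: "root (f x) = root x"
proof -
  obtain k where "periodic ((f ^^ k) x)" using ex_periodic_funpow[OF assms(1)] ..
  then have "depth x = Suc (LEAST m. periodic ((f ^^ Suc m) x))"
    unfolding depth_def by (rule Least_Suc) (use assms(2) in simp)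
  then show "depth x = Suc (depth (f x))"
    unfolding depth_def by (simp only: funpow_Suc_right o_apply)
  then show "root (f x) = root x"
    unfolding root_def by (simp only: funpow_Suc_right o_apply)
qed

lemma iterate_walk:
  assumes "x < n" "\<And>i. i < k \<Longrightarrow> h ((f ^^ i) x) = f ((f ^^ i) x)"
  shows "(x, (f ^^ k) x) \<in> fun_adj n h ^^ k"
  using assms(2)
proof (induction k)
  case (Suc k)
  then have "((f ^^ k) x, (f ^^ Suc k) x) \<in> fun_adj n h"
    using funpow_less[OF assms(1)] f_less unfolding fun_adj_def by simp
  with Suc show ?case by auto
qed simp

lemma iterate_walk_rev:
  "x < n \<Longrightarrow> (\<And>i. i < k \<Longrightarrow> h ((f ^^ i) x) = f ((f ^^ i) x)) \<Longrightarrow> ((f ^^ k) x, x) \<in> fun_adj n h ^^ k"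
  using relpow_sym[OF sym_fun_adj iterate_walk] by blast

lemma rtrancl_fun_adj_meet: "(y, z) \<in> (fun_adj n f)\<^sup>* \<Longrightarrow> \<exists>k j. (f ^^ k) z = (f ^^ j) y"
proof (induction rule: rtrancl_induct)
  case base
  show ?case by (rule exI[of _ 0], rule exI[of _ 0]) simp
next
  case (step z z')
  then obtain k j where kj: "(f ^^ k) z = (f ^^ j) y" by blast
  from step(2) have "z' = f z \<or> z = f z'" unfolding fun_adj_def by auto
  then show ?case
  proof
    assume "z' = f z"
    then have "(f ^^ k) z' = f ((f ^^ k) z)" by (simp add: funpow_swap1)
    then have "(f ^^ k) z' = (f ^^ Suc j) y" using kj by simp
    then show ?thesis by blast
  next
    assume "z = f z'"
    then have "(f ^^ Suc k) z' = (f ^^ j) y" using kj by (simp add: funpow_swap1)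
    then show ?thesis by blast
  qed
qed

lemma rel_dist_root_le_depth: "x < n \<Longrightarrow> rel_dist (fun_adj n f) N x (root x) \<le> depth x"
  unfolding root_def by (rule rel_dist_le, rule iterate_walk) simp_all

lemma periodic_if_image_eq:
  assumes "V \<subseteq> {0..<n}" "finite V" "f ` V = V" "v \<in> V"
  shows "periodic v"
proof -
  have inj: "inj_on f V" using finite_surj_inj[OF assms(2)] assms(3) by simp
  have maps: "(f ^^ k) ` V = V" for k
  proof (induction k)
    case (Suc k)
    have "(f ^^ Suc k) ` V = f ` (f ^^ k) ` V" by (simp add: image_comp)
    with Suc assms(3) show ?case by simp
  qed simp
  have inj_k: "inj_on (f ^^ k) V" for k
  proof (induction k)
    case (Suc k)
    then show ?case using comp_inj_on[OF Suc, of f] inj maps[of k] by (simp add: o_def)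
  qed simp
  have "v < n" using assms(1,4) by auto
  then obtain k where k: "periodic ((f ^^ k) v)" using ex_periodic_funpow by blast
  let ?p = "period ((f ^^ k) v)"
  have "(f ^^ k) ((f ^^ ?p) v) = (f ^^ ?p) ((f ^^ k) v)" by (rule funpow_commute)
  also have "\<dots> = (f ^^ k) v" by (rule funpow_period[OF k])
  finally have "(f ^^ ?p) v = v"
    using inj_k[of k] maps[of ?p] assms(4) unfolding inj_on_def by blast
  then show ?thesis using period_pos[OF k] unfolding periodic_def by blast
qed

lemma is_cycleU_arcs:
  assumes S: "\<And>i. i < n \<Longrightarrow> S i = {f i}" and cyc: "is_cycleU n S V E"
  shows "E = (\<lambda>v. (v, f v)) ` V" "f ` V = V"
proof -
  note V = is_cycleUD[OF cyc] and ends = is_cycleU_edge_ends[OF cyc]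
  have arc: "snd e = f (fst e)" if "e \<in> E" for e
    using that V(4) S unfolding arcs_def by auto
  have fst_E: "fst ` E = V"
  proof (rule card_subset_eq[OF V(1)])
    show "fst ` E \<subseteq> V" using ends by blast
    have "inj_on fst E" by (rule inj_onI) (simp add: prod_eq_iff arc)
    then show "card (fst ` E) = card V" using V(5) by (simp add: card_image)
  qed
  have E_graph: "(v, f v) \<in> E" if v: "v \<in> V" for v
  proof -
    obtain e where "e \<in> E" "fst e = v" using v fst_E by blast
    moreover from this have "e = (v, f v)" by (simp add: prod_eq_iff arc)
    ultimately show ?thesis by simp
  qed
  show E: "E = (\<lambda>v. (v, f v)) ` V"
  proof (intro equalityI subsetI)
    fix e assume "e \<in> E"
    then show "e \<in> (\<lambda>v. (v, f v)) ` V"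
      using ends by (intro image_eqI[of _ _ "fst e"]) (simp_all add: prod_eq_iff arc)
  qed (use E_graph in blast)
  have "f ` V \<subseteq> V" using E_graph ends by fastforce
  moreover have "v \<in> f ` V" if v: "v \<in> V" for v
  proof -
    obtain e e' where e: "e \<in> E" "e' \<in> E" "e \<noteq> e'" "v \<in> {fst e, snd e}" "v \<in> {fst e', snd e'}"
      using is_cycleU_two_edges[OF cyc v] by blast
    have "snd e = v \<or> snd e' = v"
    proof (rule ccontr)
      assume "\<not> (snd e = v \<or> snd e' = v)"
      then have "fst e = v" "fst e' = v" using e(4,5) by auto
      then have "e = e'" using e(1,2) by (simp add: prod_eq_iff arc)
      then show False using e(3) by contradiction
    qed
    then obtain x where "x \<in> E" "f (fst x) = v" using e(1,2) arc by metis
    then show ?thesis using ends by blast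
  qed
  ultimately show "f ` V = V" by blast
qed

lemma fun_adj_subset_redirect_periodic:
  assumes "u < n" "periodic u"
  shows "fun_adj n f \<subseteq> (fun_adj n (f(u := t)))\<^sup>*"
proof -
  let ?G = "fun_adj n (f(u := t))"
  have "(u, f u) \<in> ?G\<^sup>*" \<comment> \<open>through the rest of the cycle of \<open>u\<close>\<close>
  proof -
    let ?p = "period u"
    have "(f u, (f ^^ (?p - 1)) (f u)) \<in> ?G ^^ (?p - 1)"
    proof (rule iterate_walk)
      show "f u < n" using f_less[OF assms(1)] .
      fix i assume "i < ?p - 1"
      then have "(f ^^ i) (f u) \<noteq> u"
        using funpow_neq_below_period[of "Suc i" u] by (simp add: funpow_swap1)
      then show "(f(u := t)) ((f ^^ i) (f u)) = f ((f ^^ i) (f u))" by simp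
    qed
    moreover have "(f ^^ (?p - 1)) (f u) = (f ^^ Suc (?p - 1)) u"
      by (simp only: funpow_Suc_right o_apply)
    moreover have "Suc (?p - 1) = ?p" using period_pos[OF assms(2)] by simp
    ultimately have "(f u, u) \<in> ?G ^^ (?p - 1)" using funpow_period[OF assms(2)] by simp
    then have "(f u, u) \<in> ?G\<^sup>*" by (rule relpow_imp_rtrancl)
    then show ?thesis by (rule symD[OF sym_rtrancl[OF sym_fun_adj]])
  qed
  have edge: "(x, f x) \<in> ?G\<^sup>*" if x: "x < n" for x
  proof (cases "x = u")
    case False
    then have "(x, f x) \<in> ?G" using x f_less[OF x] unfolding fun_adj_def by simp
    then show ?thesis by (rule r_into_rtrancl)
  qed (use \<open>(u, f u) \<in> ?G\<^sup>*\<close> in simp)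
  show ?thesis
  proof
    fix e assume "e \<in> fun_adj n f"
    then obtain a b where e: "e = (a, b)" "a < n" "b < n" "b = f a \<or> a = f b"
      unfolding fun_adj_def by blast
    then show "e \<in> ?G\<^sup>*"
      using edge symD[OF sym_rtrancl[OF sym_fun_adj]] by blast
  qed
qed

lemma improving_move_if_disconnected:
  assumes "0 < n" "\<not> fun_connected n f"
  shows "\<exists>u t. improving_move n f u t"
proof -
  define u where "u = root 0"
  have u: "u < n" "periodic u" unfolding u_def using assms(1) root_less periodic_root by auto
  obtain t where t: "t < n" "(u, t) \<notin> (fun_adj n f)\<^sup>*"
    using assms(2) fun_connected_if_reaches_all by blast
  then have "t \<noteq> u" by auto
  define g where "g = f(u := t)"
  let ?A = "{0..<n}"
  have fewer: "fun_components n g < fun_components n f"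
    unfolding fun_components_def
  proof (rule card_quotient_less[OF _ equiv_fun_reach equiv_fun_reach])
    show "(fun_adj n f)\<^sup>* \<inter> ?A \<times> ?A \<subseteq> (fun_adj n g)\<^sup>* \<inter> ?A \<times> ?A"
      using rtrancl_subset_rtrancl[OF fun_adj_subset_redirect_periodic[OF u]]
      unfolding g_def by blast
    have "(u, t) \<in> fun_adj n g" using u(1) t(1) unfolding g_def fun_adj_def by simp
    then show "(u, t) \<in> (fun_adj n g)\<^sup>* \<inter> ?A \<times> ?A - (fun_adj n f)\<^sup>* \<inter> ?A \<times> ?A"
      using u(1) t by auto
  qed simp
  have new: "fun_ecc n g u \<le> n\<^sup>2"
    using assms(1) rel_dist_fun_adj_le_sq by (rule fun_ecc_le)
  have old: "n\<^sup>2 \<le> fun_ecc n f u"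
  proof -
    have "rel_dist (fun_adj n f) (n\<^sup>2) u t = n\<^sup>2"
      using t(2) unfolding rel_dist_def by (auto simp: rtrancl_power)
    then show ?thesis using rel_dist_le_fun_ecc[OF t(1)] by metis
  qed
  have "0 < fun_components n g" using assms(1) by (rule fun_components_pos)
  then have "n\<^sup>2 \<le> fun_components n g * n\<^sup>2" by simp
  moreover have "Suc (fun_components n g) * n\<^sup>2 \<le> fun_components n f * n\<^sup>2"
    using fewer by (intro mult_le_mono1) simp
  moreover have "0 < n\<^sup>2" using assms(1) by simp
  ultimately have "fun_cost n g u < fun_cost n f u"
    using new old unfolding fun_cost_def diff_mult_distrib mult_Suc mult_1 by linarith
  then show ?thesis using u(1) t(1) \<open>t \<noteq> u\<close> unfolding improving_move_def g_def by blast
qed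

lemma cycle_walk_redirect:
  assumes "c < n" "0 < a" "a \<le> b" "b \<le> period c"
  shows "((f ^^ a) c, (f ^^ b) c) \<in> fun_adj n (f(c := t)) ^^ (b - a)"
proof -
  have "((f ^^ a) c, (f ^^ (b - a)) ((f ^^ a) c)) \<in> fun_adj n (f(c := t)) ^^ (b - a)"
  proof (rule iterate_walk)
    show "(f ^^ a) c < n" using funpow_less[OF assms(1)] .
    fix i assume "i < b - a"
    then have "(f ^^ i) ((f ^^ a) c) \<noteq> c"
      using funpow_neq_below_period[of "i + a" c] assms(2-4) by (simp add: funpow_add)
    then show "(f(c := t)) ((f ^^ i) ((f ^^ a) c)) = f ((f ^^ i) ((f ^^ a) c))" by simp
  qed
  moreover have "(f ^^ (b - a)) ((f ^^ a) c) = (f ^^ (b - a + a)) c"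
    by (simp only: funpow_add o_apply)
  moreover have "b - a + a = b" using assms(3) by simp
  ultimately show ?thesis by simp
qed

end

locale connected_functional_graph = functional_graph +
  assumes connected: "fun_connected n f"
begin

lemma periodic_in_orbit:
  assumes "y < n" "periodic y" "z < n" "periodic z"
  shows "\<exists>i<period y. z = (f ^^ i) y"
proof -
  have "(y, z) \<in> (fun_adj n f)\<^sup>*" using connected assms(1,3) unfolding fun_connected_def by blast
  then obtain k j where kj: "(f ^^ k) z = (f ^^ j) y" using rtrancl_fun_adj_meet by blast
  define m where "m = period z * k"
  have "k \<le> m" using period_pos[OF assms(4)] unfolding m_def by simp
  have "(f ^^ ((m - k + j) mod period y)) y = (f ^^ (m - k + j)) y"
    by (rule funpow_mod_period[OF assms(2)])
  also have "\<dots> = (f ^^ (m - k)) ((f ^^ k) z)" by (simp add: funpow_add kj)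
  also have "\<dots> = (f ^^ (m - k + k)) z" by (simp only: funpow_add o_apply)
  also have "\<dots> = (f ^^ m) z" using \<open>k \<le> m\<close> by simp
  also have "\<dots> = z"
    using funpow_mod_period[OF assms(4), of m, symmetric] unfolding m_def by simp
  finally show ?thesis using period_pos[OF assms(2)] by (metis mod_less_divisor)
qed

definition cycle_vertices :: "nat set" where
  "cycle_vertices = {x. x < n \<and> periodic x}"

lemma cycle_vertices_orbit:
  assumes "c < n" "periodic c"
  shows "cycle_vertices = (\<lambda>j. (f ^^ j) c) ` {0..<period c}"
  unfolding cycle_vertices_def
  using periodic_in_orbit[OF assms] funpow_less[OF assms(1)] periodic_funpow[OF assms(2)]
  by fastforce

lemma card_cycle_vertices: "c < n \<Longrightarrow> periodic c \<Longrightarrow> card cycle_vertices = period c"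
  by (simp add: cycle_vertices_orbit card_image inj_on_funpow_period)

lemma is_cycleU_cycle_vertices:
  assumes S: "\<And>i. i < n \<Longrightarrow> S i = {f i}" and c: "c < n" "periodic c"
  shows "is_cycleU n S cycle_vertices ((\<lambda>v. (v, f v)) ` cycle_vertices)"
proof -
  define vs where "vs = map (\<lambda>j. (f ^^ j) c) [0..<period c]"
  define es where "es = map (\<lambda>j. ((f ^^ j) c, (f ^^ Suc j) c)) [0..<period c]"
  have "length vs \<ge> 2" "length es = length vs"
    unfolding vs_def es_def using two_le_period[OF c] by simp_all
  moreover have "distinct vs" "distinct es"
    using inj_on_funpow_period[OF c(2)]
    unfolding vs_def es_def by (auto simp: distinct_map inj_on_def)
  moreover have "set vs = cycle_vertices" "set es = (\<lambda>v. (v, f v)) ` cycle_vertices"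
    unfolding vs_def es_def cycle_vertices_orbit[OF c] by auto
  moreover have "set vs \<subseteq> {0..<n}" "set es \<subseteq> arcs n S"
    unfolding vs_def es_def arcs_def using funpow_less[OF c(1)] S by auto
  moreover have "joins (es ! j) (vs ! j) (vs ! (Suc j mod length vs))" if "j < length vs" for j
    using that funpow_mod_period[OF c(2), of "Suc j"] unfolding vs_def es_def joins_def
    by simp
  ultimately show ?thesis unfolding is_cycleU_def by blast
qed

lemma is_cycleU_eq_cycle_vertices:
  assumes S: "\<And>i. i < n \<Longrightarrow> S i = {f i}" and cyc: "is_cycleU n S V E"
  shows "V = cycle_vertices" "E = (\<lambda>v. (v, f v)) ` cycle_vertices"
proof -
  note V = is_cycleUD[OF cyc] and fV = is_cycleU_arcs[OF S cyc]
  have "V \<subseteq> cycle_vertices"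
    using periodic_if_image_eq[OF V(3,1) fV(2)] V(3) unfolding cycle_vertices_def by auto
  moreover obtain v where v: "v \<in> V" using V(2) by blast
  then have "cycle_vertices \<subseteq> (\<lambda>j. (f ^^ j) v) ` {0..<period v}"
    using cycle_vertices_orbit \<open>V \<subseteq> cycle_vertices\<close> unfolding cycle_vertices_def by blast
  moreover have "(f ^^ j) v \<in> V" for j
    using v fV(2) by (induction j) auto
  ultimately show "V = cycle_vertices" by blast
  then show "E = (\<lambda>v. (v, f v)) ` cycle_vertices" using fV(1) by simp
qed

definition cycle_index :: "nat \<Rightarrow> nat \<Rightarrow> nat" where
  "cycle_index c y = (LEAST j. (f ^^ j) c = y)"

definition cycle_offset :: "nat \<Rightarrow> nat \<Rightarrow> nat" where
  "cycle_offset c y = min (cycle_index c y) (period c - cycle_index c y)"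

lemma cycle_index_funpow:
  assumes "periodic c" "j < period c"
  shows "cycle_index c ((f ^^ j) c) = j"
proof -
  have "(f ^^ cycle_index c ((f ^^ j) c)) c = (f ^^ j) c"
    unfolding cycle_index_def by (rule LeastI) (rule refl)
  moreover have "cycle_index c ((f ^^ j) c) \<le> j"
    unfolding cycle_index_def by (rule Least_le) (rule refl)
  ultimately show ?thesis
    using inj_on_funpow_period[OF assms(1)] assms(2) by (auto simp: inj_on_def)
qed

lemma cycle_index_f:
  assumes "c < n" "periodic c" "y < n" "periodic y"
  shows "cycle_index c (f y) = Suc (cycle_index c y) mod period c"
proof -
  obtain j where j: "j < period c" "y = (f ^^ j) c" using periodic_in_orbit[OF assms] by blast
  have "f y = (f ^^ (Suc j mod period c)) c"
    using j(2) funpow_mod_period[OF assms(2), of "Suc j"] by simp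
  then show ?thesis using j cycle_index_funpow[OF assms(2)] period_pos[OF assms(2)] by simp
qed

lemma cycle_offset_f:
  assumes "c < n" "periodic c" "y < n" "periodic y"
  shows "\<bar>int (cycle_offset c (f y)) - int (cycle_offset c y)\<bar> \<le> 1"
proof -
  obtain j where j: "j < period c" "y = (f ^^ j) c" using periodic_in_orbit[OF assms] by blast
  then have i: "cycle_index c y = j" using cycle_index_funpow[OF assms(2)] by simp
  show ?thesis
  proof (cases "Suc j < period c")
    case True
    then show ?thesis using cycle_index_f[OF assms] i unfolding cycle_offset_def by simp
  next
    case False
    then have "Suc j = period c" using j(1) by simp
    then show ?thesis
      using cycle_index_f[OF assms] i two_le_period[OF assms(1,2)] unfolding cycle_offset_def
      by simp
  qed
qed

lemma offset_depth_f:
  assumes "c < n" "periodic c" "x < n"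
  shows "\<bar>int (cycle_offset c (root (f x)) + depth (f x))
            - int (cycle_offset c (root x) + depth x)\<bar> \<le> 1"
proof (cases "periodic x")
  case True
  then have "periodic (f x)" by (rule periodic_f)
  with True show ?thesis
    using cycle_offset_f[OF assms True] f_less[OF assms(3)]
    by (simp add: root_eq_self depth_eq_0)
next
  case False
  then show ?thesis using depth_f[OF assms(3) False] root_f[OF assms(3) False] by simp
qed

lemma offset_depth_le_rel_dist:
  assumes "c < n" "periodic c" "x < n"
  shows "cycle_offset c (root x) + depth x \<le> rel_dist (fun_adj n f) N c x"
proof -
  define pot where "pot y = int (cycle_offset c (root y) + depth y)" for y
  have step: "pot b \<le> pot a + 1" if "(a, b) \<in> fun_adj n f" for a b
    using that offset_depth_f[OF assms(1,2), of a] offset_depth_f[OF assms(1,2), of b]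
    unfolding fun_adj_def pot_def by auto
  have "(c, x) \<in> (fun_adj n f)\<^sup>*" using connected assms(1,3) unfolding fun_connected_def by blast
  then obtain k where "(c, x) \<in> fun_adj n f ^^ k" by (auto simp: rtrancl_power)
  from potential_le_rel_dist[of "fun_adj n f" pot, OF step this, where N = N]
  have "pot x - pot c \<le> int (rel_dist (fun_adj n f) N c x)" .
  moreover have "pot c = 0"
    using cycle_index_funpow[OF assms(2), of 0] period_pos[OF assms(2)]
    by (simp add: pot_def root_eq_self[OF assms(2)] depth_eq_0[OF assms(2)] cycle_offset_def)
  ultimately show ?thesis unfolding pot_def by simp
qed

lemma depth_less_fun_ecc:
  assumes "x < n"
  shows "depth x < fun_ecc n f x"
proof - \<comment> \<open>\<open>f (root x)\<close> is at distance \<open>depth x + 1\<close> from \<open>x\<close>\<close>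
  define r where "r = root x"
  have r: "r < n" "periodic r" unfolding r_def using assms root_less periodic_root by auto
  then have fr: "f r < n" "periodic (f r)" using f_less periodic_f by auto
  define L where "L = period (f r)"
  have L: "L = period r" "2 \<le> L"
    using card_cycle_vertices[OF r] card_cycle_vertices[OF fr] two_le_period[OF fr]
    unfolding L_def by simp_all
  have "(f ^^ (L - 1)) (f r) = (f ^^ Suc (L - 1)) r" by (simp only: funpow_Suc_right o_apply)
  also have "Suc (L - 1) = L" using L(2) by simp
  finally have "(f ^^ (L - 1)) (f r) = (f ^^ L) r" .
  then have "cycle_index (f r) r = L - 1"
    using cycle_index_funpow[OF fr(2), of "L - 1"] funpow_period[OF r(2)] L unfolding L_def by simp
  then have "cycle_offset (f r) r = 1"
    unfolding cycle_offset_def L_def[symmetric] using L(2) by simp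
  then have "depth x < rel_dist (fun_adj n f) (n\<^sup>2) (f r) x"
    using offset_depth_le_rel_dist[OF fr assms, of "n\<^sup>2"] unfolding r_def by simp
  also have "\<dots> \<le> fun_ecc n f x"
    using rel_dist_le_fun_ecc[OF fr(1)] rel_dist_sym[OF sym_fun_adj] by metis
  finally show ?thesis .
qed

lemma chord_reaches_cycle:
  assumes c: "c < n" "periodic c" and long: "8 \<le> period c" and y: "y < n" "periodic y"
  shows "\<exists>w \<le> period c div 2 - 1. (c, y) \<in> fun_adj n (f(c := (f ^^ 3) c)) ^^ w"
proof -
  let ?G = "fun_adj n (f(c := (f ^^ 3) c))" and ?m = "period c div 2"
  have rev_walk: "(a, b) \<in> ?G ^^ k \<Longrightarrow> (b, a) \<in> ?G ^^ k" for a b k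
    by (rule relpow_sym[OF sym_fun_adj])
  have chord: "(c, (f ^^ 3) c) \<in> ?G ^^ 1" using c funpow_less unfolding fun_adj_def by simp
  obtain j where j: "j < period c" "y = (f ^^ j) c" using periodic_in_orbit[OF c y] by blast
  consider "j = 0" | "0 < j" "j \<le> 3" | "3 \<le> j" "j \<le> ?m + 1" | "?m + 2 \<le> j" by linarith
  then show ?thesis
  proof cases
    case 1
    then show ?thesis using j by (intro exI[of _ 0]) simp
  next
    case 2
    then have "((f ^^ j) c, (f ^^ 3) c) \<in> ?G ^^ (3 - j)"
      using cycle_walk_redirect[OF c(1)] long by simp
    then have "(c, y) \<in> ?G ^^ (1 + (3 - j))" using relpow_trans[OF chord rev_walk] j(2) by blast
    moreover have "1 + (3 - j) \<le> ?m - 1" using 2 long by simp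
    ultimately show ?thesis by blast
  next
    case 3
    then have "((f ^^ 3) c, (f ^^ j) c) \<in> ?G ^^ (j - 3)"
      using cycle_walk_redirect[OF c(1)] j(1) by simp
    then have "(c, y) \<in> ?G ^^ (1 + (j - 3))" using relpow_trans[OF chord] j(2) by blast
    moreover have "1 + (j - 3) \<le> ?m - 1" using 3 long by simp
    ultimately show ?thesis by blast
  next
    case 4
    then have "((f ^^ j) c, (f ^^ period c) c) \<in> ?G ^^ (period c - j)"
      using cycle_walk_redirect[OF c(1)] j(1) by simp
    then have "(c, y) \<in> ?G ^^ (period c - j)" using rev_walk funpow_period[OF c(2)] j(2) by simp
    moreover have "period c - j \<le> ?m - 1" using 4 j(1) by simp
    ultimately show ?thesis by blast
  qed
qed

lemma chord_reaches_all:
  assumes c: "c < n" "periodic c" and long: "8 \<le> period c" and x: "x < n"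
  shows "\<exists>k \<le> period c div 2 - 1 + depth x. (c, x) \<in> fun_adj n (f(c := (f ^^ 3) c)) ^^ k"
proof -
  let ?G = "fun_adj n (f(c := (f ^^ 3) c))"
  obtain w where w: "w \<le> period c div 2 - 1" "(c, root x) \<in> ?G ^^ w"
    using chord_reaches_cycle[OF c long root_less[OF x] periodic_root[OF x]] by blast
  have "(root x, x) \<in> ?G ^^ depth x"
    unfolding root_def
  proof (rule iterate_walk_rev[OF x])
    fix i assume "i < depth x"
    then have "(f ^^ i) x \<noteq> c" using not_periodic_below_depth c(2) by blast
    then show "(f(c := (f ^^ 3) c)) ((f ^^ i) x) = f ((f ^^ i) x)" by simp
  qed
  then have "(c, x) \<in> ?G ^^ (w + depth x)" using w(2) by (rule relpow_trans[rotated])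
  then show ?thesis using w(1) by (intro exI[of _ "w + depth x"]) simp
qed


lemma chord_connected_fun_ecc:
  assumes c: "c < n" "periodic c" and long: "8 \<le> period c"
    and D: "\<And>x. x < n \<Longrightarrow> depth x \<le> D"
  shows "fun_connected n (f(c := (f ^^ 3) c))"
    and "fun_ecc n (f(c := (f ^^ 3) c)) c \<le> period c div 2 - 1 + D"
proof -
  let ?G = "fun_adj n (f(c := (f ^^ 3) c))"
  show "fun_connected n (f(c := (f ^^ 3) c))"
  proof (rule fun_connected_if_reaches_all)
    fix x assume "x < n"
    then obtain k where "(c, x) \<in> ?G ^^ k" using chord_reaches_all[OF c long] by blast
    then show "(c, x) \<in> ?G\<^sup>*" by (rule relpow_imp_rtrancl)
  qed
  show "fun_ecc n (f(c := (f ^^ 3) c)) c \<le> period c div 2 - 1 + D"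
  proof (rule fun_ecc_le)
    show "0 < n" using c by simp
    fix x assume x: "x < n"
    then obtain k where k: "k \<le> period c div 2 - 1 + depth x" and walk: "(c, x) \<in> ?G ^^ k"
      using chord_reaches_all[OF c long] by blast
    have "rel_dist ?G (n\<^sup>2) c x \<le> k" using walk by (rule rel_dist_le)
    then show "rel_dist ?G (n\<^sup>2) c x \<le> period c div 2 - 1 + D" using k D[OF x] by linarith
  qed
qed
end

section \<open>Improving moves of a deepest vertex and of the cycle\<close>

locale deepest_vertex = connected_functional_graph +
  fixes v :: nat
  assumes deepest_less: "v < n" and depth_le_deepest: "x < n \<Longrightarrow> depth x \<le> depth v"
begin

lemma f_neq_of_max_depth:
  assumes "0 < depth v" "y < n" "depth y = depth v" "z < n"
  shows "f z \<noteq> y"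
proof
  assume fz: "f z = y"
  have "\<not> periodic y" using assms(1,3) depth_eq_0 by force
  then have "\<not> periodic z" using periodic_f fz by blast
  then have "depth z = Suc (depth v)" using depth_f[OF assms(4)] fz assms(3) by simp
  then show False using depth_le_deepest[OF assms(4)] by simp
qed

lemma improving_move_long_cycle:
  assumes long: "8 \<le> card cycle_vertices"
  shows "\<exists>c. improving_move n f c ((f ^^ 3) c)"
proof - \<comment> \<open>\<open>c\<close> lies \<open>L div 2\<close> steps before the root of \<open>v\<close> on the cycle\<close>
  define r where "r = root v"
  have r: "r < n" "periodic r" unfolding r_def using deepest_less root_less periodic_root by auto
  define L where "L = period r"
  define m where "m = L div 2"
  define c where "c = (f ^^ (L - m)) r"
  have c: "c < n" "periodic c" unfolding c_def using funpow_less periodic_funpow r by auto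
  have L: "period c = L" "L = card cycle_vertices"
    using card_cycle_vertices[OF c] card_cycle_vertices[OF r] unfolding L_def by simp_all
  have "(f ^^ m) c = (f ^^ L) r" unfolding c_def m_def funpow_apply_add by simp
  then have "cycle_index c r = m"
    using cycle_index_funpow[OF c(2), of m] funpow_period[OF r(2)] L long
    unfolding L_def m_def by simp
  then have "cycle_offset c r = m" unfolding cycle_offset_def m_def L by simp
  then have "m + depth v \<le> rel_dist (fun_adj n f) (n\<^sup>2) c v"
    using offset_depth_le_rel_dist[OF c deepest_less] unfolding r_def by simp
  also have "\<dots> \<le> fun_ecc n f c" by (rule rel_dist_le_fun_ecc[OF deepest_less])
  finally have old: "m + depth v \<le> fun_ecc n f c" .
  have long_c: "8 \<le> period c" using L long by simp
  note new = chord_connected_fun_ecc[OF c long_c depth_le_deepest]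
  have "improving_move n f c ((f ^^ 3) c)"
  proof (rule improving_move_if_fun_ecc_less)
    show "c < n" "(f ^^ 3) c < n" using c funpow_less by auto
    show "(f ^^ 3) c \<noteq> c" using funpow_neq_below_period[of 3 c] long_c by simp
    show "fun_connected n f" by (rule connected)
    show "fun_connected n (f(c := (f ^^ 3) c))" by (rule new(1))
    show "fun_ecc n (f(c := (f ^^ 3) c)) c < fun_ecc n f c"
      using new(2) old L long unfolding m_def by linarith
  qed
  then show ?thesis ..
qed

context
  assumes deep: "3 \<le> depth v"
begin

lemma deep_parents:
  shows "f v < n" "depth (f v) = depth v - 1" "f (f v) < n" "depth (f (f v)) = depth v - 2"
proof -
  have "\<not> periodic v" using deep depth_eq_0 by force
  then show "f v < n" "depth (f v) = depth v - 1"
    using depth_f[OF deepest_less] f_less[OF deepest_less] by simp_all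
  moreover from this have "\<not> periodic (f v)" using deep depth_eq_0 by force
  ultimately show "f (f v) < n" "depth (f (f v)) = depth v - 2"
    using depth_f[of "f v"] f_less by simp_all
qed

lemma sibling_depth: "y < n \<Longrightarrow> f y = f v \<Longrightarrow> depth y = depth v"
  using deep_parents periodic_f depth_eq_0 depth_f[of y] deep by fastforce

lemma grandparent_walk_less:
  assumes "x < n" "x \<noteq> v" "x \<noteq> f v" "f x \<noteq> f v"
  shows "\<exists>j. Suc j \<le> rel_dist (fun_adj n f) (n\<^sup>2) v x \<and> (v, x) \<in> fun_adj n (f(v := f (f v))) ^^ j"
  using assms
proof (induction "rel_dist (fun_adj n f) (n\<^sup>2) v x" arbitrary: x rule: less_induct)
  \<comment> \<open>A shortest walk from the leaf \<open>v\<close> to \<open>x\<close> passes \<open>f v\<close> and then \<open>f (f v)\<close>, since the other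
    neighbours of \<open>f v\<close> are leaves; after the redirection it can skip \<open>f v\<close>.\<close>
  case less
  let ?d = "rel_dist (fun_adj n f) (n\<^sup>2) v" and ?G = "fun_adj n (f(v := f (f v)))"
  have "(v, x) \<in> (fun_adj n f)\<^sup>*"
    using connected deepest_less less.prems(1) unfolding fun_connected_def by blast
  then obtain k where k: "(v, x) \<in> fun_adj n f ^^ k" by (auto simp: rtrancl_power)
  then have "?d x \<noteq> 0" using rel_dist_eq_0D less.prems(2) by metis
  then obtain d where d: "?d x = Suc d" using not0_implies_Suc by blast
  obtain y where y: "?d y = d" "(v, y) \<in> fun_adj n f ^^ d" "(y, x) \<in> fun_adj n f"
    using rel_dist_SucE[OF k d] by blast
  have "y < n" and yx: "x = f y \<or> y = f x" using y(3) unfolding fun_adj_def by auto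
  have max_depth_leaf: "f x \<noteq> z" if "z < n" "depth z = depth v" for z
    using f_neq_of_max_depth[OF _ that less.prems(1)] deep by simp
  consider "y = v" | "y = f v" | "y \<noteq> v" "y \<noteq> f v" "f y = f v" | "y \<noteq> v" "y \<noteq> f v" "f y \<noteq> f v"
    by blast
  then show ?case
  proof cases
    case 1
    then show ?thesis using yx less.prems(3) max_depth_leaf[OF deepest_less] by blast
  next
    case 2
    then have "x = f (f v)" using yx less.prems(4) by auto
    moreover have "d \<noteq> 0" using rel_dist_eq_0D[OF y(2)] y(1) 2 f_neq[OF deepest_less] by auto
    ultimately show ?thesis
      using deepest_less deep_parents unfolding d by (intro exI[of _ 1]) (auto simp: fun_adj_def)
  next
    case 3
    then show ?thesis
      using yx less.prems(3) max_depth_leaf[OF \<open>y < n\<close> sibling_depth[OF \<open>y < n\<close>]] by auto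
  next
    case 4
    then obtain j where j: "Suc j \<le> d" "(v, y) \<in> ?G ^^ j"
      using less.hyps[of y] y(1) d \<open>y < n\<close> by auto
    have "(y, x) \<in> ?G" using y(3) 4(1) less.prems(2) unfolding fun_adj_def by auto
    then show ?thesis using j d by (intro exI[of _ "Suc j"]) auto
  qed
qed

lemma grandparent_walk:
  assumes "x < n"
  shows "\<exists>j \<le> max 3 (rel_dist (fun_adj n f) (n\<^sup>2) v x - 1).
           (v, x) \<in> fun_adj n (f(v := f (f v))) ^^ j"
proof -
  let ?G = "fun_adj n (f(v := f (f v)))"
  have vp: "(v, f (f v)) \<in> ?G" and pw: "(f (f v), f v) \<in> ?G"
    using deepest_less deep_parents f_neq[OF deepest_less] unfolding fun_adj_def by auto
  consider "x = v" | "x = f v" | "x \<noteq> v" "x \<noteq> f v" "f x = f v" | "x \<noteq> v" "x \<noteq> f v" "f x \<noteq> f v"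
    by blast
  then show ?thesis
  proof cases
    case 1
    then show ?thesis by (intro exI[of _ 0]) simp
  next
    case 2
    then have "(v, x) \<in> ?G ^^ 2" using vp pw by (auto simp: numeral_2_eq_2)
    then show ?thesis by (intro exI[of _ 2]) simp
  next
    case 3
    then have "(f v, x) \<in> ?G" using assms deep_parents unfolding fun_adj_def by auto
    then have "(v, x) \<in> ?G ^^ 3" using vp pw by (auto simp: numeral_3_eq_3)
    then show ?thesis by (intro exI[of _ 3]) simp
  next
    case 4
    then obtain j where "Suc j \<le> rel_dist (fun_adj n f) (n\<^sup>2) v x" "(v, x) \<in> ?G ^^ j"
      using grandparent_walk_less[OF assms] by blast
    then show ?thesis by (intro exI[of _ j]) auto
  qed
qed

lemma improving_move_grandparent: "improving_move n f v (f (f v))"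
proof (rule improving_move_if_fun_ecc_less)
  let ?g = "f(v := f (f v))"
  show "v < n" "f (f v) < n" by (simp_all add: deepest_less deep_parents)
  show "f (f v) \<noteq> v" using deep_parents deep by fastforce
  show "fun_connected n f" by (rule connected)
  show "fun_connected n ?g"
    using grandparent_walk
    by (intro fun_connected_if_reaches_all[of _ v]) (meson relpow_imp_rtrancl)
  have "depth v < fun_ecc n f v" by (rule depth_less_fun_ecc[OF deepest_less])
  then have "max 3 (fun_ecc n f v - 1) < fun_ecc n f v" using deep by simp
  moreover have "fun_ecc n ?g v \<le> max 3 (fun_ecc n f v - 1)"
  proof (rule fun_ecc_le)
    show "0 < n" using deepest_less by simp
    fix x assume "x < n"
    then obtain j where j: "j \<le> max 3 (rel_dist (fun_adj n f) (n\<^sup>2) v x - 1)"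
      and walk: "(v, x) \<in> fun_adj n ?g ^^ j"
      using grandparent_walk by blast
    have "rel_dist (fun_adj n ?g) (n\<^sup>2) v x \<le> j" using walk by (rule rel_dist_le)
    moreover have "rel_dist (fun_adj n f) (n\<^sup>2) v x \<le> fun_ecc n f v"
      using rel_dist_le_fun_ecc[OF \<open>x < n\<close>] .
    ultimately show "rel_dist (fun_adj n ?g) (n\<^sup>2) v x \<le> max 3 (fun_ecc n f v - 1)"
      using j by linarith
  qed
  ultimately show "fun_ecc n ?g v < fun_ecc n f v" by linarith
qed

end

end

locale unit_budget_equilibrium = functional_graph +
  assumes n_pos: "0 < n" and no_improving_move: "\<not> improving_move n f u t"
begin

lemma equilibrium_connected: "fun_connected n f"
  using improving_move_if_disconnected n_pos no_improving_move by blast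

sublocale connected_functional_graph n f
  by unfold_locales (rule equilibrium_connected)

lemma ex_deepest_vertex: "\<exists>v. deepest_vertex n f v"
proof -
  have fin: "finite (depth ` {0..<n})" "depth ` {0..<n} \<noteq> {}" using n_pos by auto
  obtain v where v: "v < n" "depth v = Max (depth ` {0..<n})"
    using Max_in[OF fin] by auto
  have "depth x \<le> depth v" if "x < n" for x
    unfolding v(2) using that by (intro Max_ge[OF fin(1)]) simp
  with v(1) have "deepest_vertex n f v"
    by (intro deepest_vertex.intro connected_functional_graph_axioms deepest_vertex_axioms.intro)
  then show ?thesis ..
qed

lemma depth_le_2: "x < n \<Longrightarrow> depth x \<le> 2"
proof -
  assume "x < n"
  obtain v where "deepest_vertex n f v" using ex_deepest_vertex ..
  then interpret deepest_vertex n f v .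
  have "\<not> 3 \<le> depth v" using improving_move_grandparent no_improving_move by blast
  then show ?thesis using depth_le_deepest[OF \<open>x < n\<close>] by simp
qed

lemma card_cycle_vertices_le_7: "card cycle_vertices \<le> 7"
proof -
  obtain v where "deepest_vertex n f v" using ex_deepest_vertex ..
  then interpret deepest_vertex n f v .
  show ?thesis using improving_move_long_cycle no_improving_move by fastforce
qed

lemma near_cycle:
  assumes "x < n"
  shows "\<exists>c\<in>cycle_vertices. rel_dist (fun_adj n f) N x c \<le> 2"
proof
  show "root x \<in> cycle_vertices"
    using root_less[OF assms] periodic_root[OF assms] unfolding cycle_vertices_def by simp
  show "rel_dist (fun_adj n f) N x (root x) \<le> 2"
    using rel_dist_root_le_depth[OF assms] depth_le_2[OF assms] by (rule le_trans)
qed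

end

lemma unit_budget_profile:
  assumes "valid_profile n (\<lambda>_. 1) S"
  obtains f where "\<And>i. i < n \<Longrightarrow> S i = {f i}" "functional_graph n f"
proof -
  define f where "f i = the_elem (S i)" for i
  have f: "S i = {f i} \<and> f i < n \<and> f i \<noteq> i" if "i < n" for i
  proof -
    from assms that have S: "S i \<subseteq> {0..<n} - {i}" "card (S i) = 1"
      unfolding valid_profile_def by auto
    then obtain a where "S i = {a}" by (metis card_1_singletonE)
    then show ?thesis using S(1) unfolding f_def by simp
  qed
  show thesis
  proof (rule that)
    show "S i = {f i}" if "i < n" for i using f[OF that] by blast
    show "functional_graph n f" unfolding functional_graph_def using f by blast
  qed
qed

lemma max_equilibrium_no_improving_move:
  assumes "max_equilibrium n (\<lambda>_. 1) S" "\<And>i. i < n \<Longrightarrow> S i = {f i}"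
  shows "\<not> improving_move n f u t"
proof
  assume move: "improving_move n f u t"
  then have "{t} \<subseteq> {0..<n} - {u}" "u < n" unfolding improving_move_def by auto
  then have "cost_max n S u \<le> cost_max n (S(u := {t})) u"
    using assms(1) unfolding max_equilibrium_def by simp
  moreover have "cost_max n (S(u := {t})) u = fun_cost n (f(u := t)) u"
    by (rule cost_max_eq_fun_cost) (simp add: assms(2))
  ultimately show False
    using move cost_max_eq_fun_cost[OF assms(2)] unfolding improving_move_def by simp
qed

theorem mainTheorem7:
  fixes n :: nat and S :: "nat \<Rightarrow> nat set"
  assumes "n \<ge> 2"
    and "max_equilibrium n (\<lambda>_. 1) S"
  shows "connectedU n S \<and>
         (\<exists>!VE. is_cycleU n S (fst VE) (snd VE)) \<and>
         (\<forall>V E. is_cycleU n S V E \<longrightarrow>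
            card V \<le> 7 \<and> (\<forall>v<n. \<exists>c\<in>V. distU n S v c \<le> 2))"
proof -
  obtain f where S: "\<And>i. i < n \<Longrightarrow> S i = {f i}" and f: "functional_graph n f"
    using assms(2) unit_budget_profile unfolding max_equilibrium_def by blast
  have "0 < n" using assms(1) by simp
  with f interpret unit_budget_equilibrium n f
    using max_equilibrium_no_improving_move[OF assms(2) S]
    by (intro unit_budget_equilibrium.intro unit_budget_equilibrium_axioms.intro)
  let ?C = "(cycle_vertices, (\<lambda>v. (v, f v)) ` cycle_vertices)"
  have "\<exists>!VE. is_cycleU n S (fst VE) (snd VE)"
  proof (rule ex1I[of _ ?C])
    show "is_cycleU n S (fst ?C) (snd ?C)"
      using is_cycleU_cycle_vertices[OF S root_less periodic_root] n_pos by simp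
  next
    fix VE assume "is_cycleU n S (fst VE) (snd VE)"
    from is_cycleU_eq_cycle_vertices[OF S this]
    show "VE = ?C" by (simp add: prod_eq_iff)
  qed
  moreover have "card V \<le> 7 \<and> (\<forall>v<n. \<exists>c\<in>V. distU n S v c \<le> 2)" if "is_cycleU n S V E" for V E
  proof -
    have "V = cycle_vertices" by (rule is_cycleU_eq_cycle_vertices(1)[OF S that])
    moreover have "adjU n S = fun_adj n f" by (rule adjU_eq_fun_adj) (rule S)
    ultimately show ?thesis
      unfolding distU_eq_rel_dist using card_cycle_vertices_le_7 near_cycle by simp
  qed
  moreover have "connectedU n S"
    using connectedU_iff_fun_connected[of n S f] S equilibrium_connected by blast
  ultimately show ?thesis by blast
qed

end
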